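(* Let $K^*\in\mathbb{N}$, $M>0$, $p\in\mathbb{N}$, let $\mathcal{Y}\subset\mathbb{R}^{K^*}$ be a closed set, let $f_*:[-M,M]^p\to\mathcal{Y}$ be continuous, and let $g_*:\mathcal{Y}^2\to\mathbb{R}$ be a kernel for which there exists a positive definite kernel $g$ on $\mathcal{Y}^2$ such that $g-g_*$ is positive definite. Let $\sigma:\mathbb{R}\to\mathbb{R}$ be either the ReLU function or a function that is non-constant, continuous, bounded and monotonically increasing. Then for every $\varepsilon>0$, for sufficiently large $K_+,K_-\in\mathbb{N}$, $T_+=T_+(K_+)\in\mathbb{N}$, $T_-=T_-(K_-)\in\mathbb{N}$, there exist $\boldsymbol A\in\mathbb{R}^{K_+\times T_+}$, $\boldsymbol B\in\mathbb{R}^{T_+\times p}$, $\boldsymbol c\in\mathbb{R}^{T_+}$, $\boldsymbol E\in\mathbb{R}^{K_-\times T_-}$, $\boldsymbol F\in\mathbb{R}^{T_-\times p}$, $\boldsymbol o\in\mathbb{R}^{T_-}$ such that \[ \Big| g_*\big(f_*(\boldsymbol x),f_*(\boldsymbol x')\big) - \big( \langle f_{\boldsymbol\psi}(\boldsymbol x), f_{\boldsymbol\psi}(\boldsymbol x')\rangle - \langle r_{\boldsymbol\zeta}(\boldsymbol x), r_{\boldsymbol\zeta}(\boldsymbol x')\rangle\big)\Big| < \varepsilon \] for all $(\boldsymbol x,\boldsymbol x')\in[-M,M]^{2p}$, where $f_{\boldsymbol\psi}(\boldsymbol x)=\boldsymbol A\,\boldsymbol\sigma(\boldsymbol B\boldsymbol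 x+\boldsymbol c)\in\mathbb{R}^{K_+}$ and $r_{\boldsymbol\zeta}(\boldsymbol x)=\boldsymbol E\,\boldsymbol\sigma(\boldsymbol F\boldsymbol x+\boldsymbol o)\in\mathbb{R}^{K_-}$, and $\boldsymbol\sigma$ denotes $\sigma$ applied element-wise.
   Context: A kernel on $\mathcal{Y}^2$ is a symmetric continuous function $g:\mathcal{Y}^2\to\mathbb{R}$. A kernel $g$ is positive definite (PD) if $\sum_{i=1}^n\sum_{j=1}^n c_ic_j g(\boldsymbol y_i,\boldsymbol y_j)\ge 0$ for all $n\in\mathbb{N}$, all $\boldsymbol y_1,\dots,\boldsymbol y_n\in\mathcal{Y}$ and all $c_1,\dots,c_n\in\mathbb{R}$. $\langle\cdot,\cdot\rangle$ is the Euclidean inner product. *)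

theory Defs
  imports "HOL-Analysis.Analysis"
begin

definition is_kernel :: "'a::topological_space set \<Rightarrow> ('a \<Rightarrow> 'a \<Rightarrow> real) \<Rightarrow> bool" where
  "is_kernel Y g \<longleftrightarrow> (\<forall>y\<in>Y. \<forall>y'\<in>Y. g y y' = g y' y)
     \<and> continuous_on (Y \<times> Y) (\<lambda>(y, y'). g y y')"

definition pd_on :: "'a set \<Rightarrow> ('a \<Rightarrow> 'a \<Rightarrow> real) \<Rightarrow> bool" where
  "pd_on Y g \<longleftrightarrow> (\<forall>(n::nat) (ys::nat \<Rightarrow> 'a) (c::nat \<Rightarrow> real).
     (\<forall>i<n. ys i \<in> Y) \<longrightarrow> (\<Sum>i<n. \<Sum>j<n. c i * c j * g (ys i) (ys j)) \<ge> 0)"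

definition pd_kernel :: "'a::topological_space set \<Rightarrow> ('a \<Rightarrow> 'a \<Rightarrow> real) \<Rightarrow> bool" where
  "pd_kernel Y g \<longleftrightarrow> is_kernel Y g \<and> pd_on Y g"

definition relu :: "real \<Rightarrow> real" where
  "relu x = max 0 x"

definition cube :: "real \<Rightarrow> (real ^ 'p) set" where
  "cube M = {x. \<forall>i. \<bar>x $ i\<bar> \<le> M}"

text \<open>One-hidden-layer network x \<mapsto> A \<sigma>(B x + c), with A a K\<times>T matrix
  (entries A i t, i<K, t<T), B a T\<times>p matrix (row t is B t), c \<in> R^T.
  The output is a vector in R^K, represented as a function on {0..<K}.\<close>
definition shallow_net ::
  "(real \<Rightarrow> real) \<Rightarrow> nat \<Rightarrow> (nat \<Rightarrow> nat \<Rightarrow> real) \<Rightarrow> (nat \<Rightarrow> real ^ 'p) \<Rightarrow> (nat \<Rightarrow> real)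
     \<Rightarrow> real ^ 'p \<Rightarrow> nat \<Rightarrow> real" where
  "shallow_net \<sigma> T A B c x i = (\<Sum>t<T. A i t * \<sigma> (B t \<bullet> x + c t))"

definition inner_K :: "nat \<Rightarrow> (nat \<Rightarrow> real) \<Rightarrow> (nat \<Rightarrow> real) \<Rightarrow> real" where
  "inner_K K u v = (\<Sum>i<K. u i * v i)"

end

theory Submission
  imports Defs
begin

(* Put k(x, x') = g_*(f_*(x), f_*(x')), a continuous symmetric function on C \<times> C, where
   C = [-M,M]^p is compact. By Stone-Weierstrass, k is uniformly close to a linear combination of
   exponentials exp(w \<bullet> (x, x')) = exp(w1 \<bullet> x) exp(w2 \<bullet> x'), and by symmetry also to its
   symmetrization. Polarization, (u(x) v(x') + u(x') v(x))/2 = P(x) P(x') - Q(x) Q(x') with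
   P = (u + v)/2 and Q = (u - v)/2, turns that into sum_i P_i(x) P_i(x') - sum_j Q_j(x) Q_j(x')
   with every P_i, Q_j a combination of functions exp(w \<bullet> x). Either activation yields a squashing
   function H that is itself a small network (for ReLU, relu s - relu (s - 1)), and a continuous
   function of one variable is uniformly approximated on an interval by staircases
   sum_k D_k H(kappa (t - c_k)); so the P_i and Q_j are uniform limits of networks. Placing the
   networks for the P_i side by side in one hidden layer, output i reading only its own block,
   gives f_psi, and likewise r_zeta; surplus hidden units and outputs get zero weights. *)

section \<open>Squashing functions\<close>

definition squashing :: "(real \<Rightarrow> real) \<Rightarrow> bool" where
  "squashing H \<longleftrightarrow> (\<forall>s. 0 \<le> H s \<and> H s \<le> 1) \<and> (H \<longlongrightarrow> 0) at_bot \<and> (H \<longlongrightarrow> 1) at_top"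

lemma squashing_relu_difference: "squashing (\<lambda>s. relu s - relu (s - 1))"
proof -
  have "eventually (\<lambda>s. relu s - relu (s - 1) = 0) at_bot"
    unfolding eventually_at_bot_linorder by (rule exI[of _ 0]) (simp add: relu_def)
  moreover have "eventually (\<lambda>s. relu s - relu (s - 1) = 1) at_top"
    unfolding eventually_at_top_linorder by (rule exI[of _ 1]) (simp add: relu_def)
  ultimately show ?thesis
    unfolding squashing_def by (auto simp: relu_def intro: tendsto_eventually)
qed

lemma mono_tendsto_Sup_at_top:
  fixes f :: "'a::linorder \<Rightarrow> 'b::{conditionally_complete_linorder,linorder_topology}"
  assumes "mono f" "bdd_above (range f)"
  shows "(f \<longlongrightarrow> Sup (range f)) at_top"
proof (rule increasing_tendsto)
  show "eventually (\<lambda>s. f s \<le> Sup (range f)) at_top"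
    using assms(2) by (intro always_eventually allI cSup_upper) auto
  fix y assume "y < Sup (range f)"
  then obtain s0 where "y < f s0"
    using less_cSup_iff[of "range f"] assms(2) by auto
  then show "eventually (\<lambda>s. y < f s) at_top"
    unfolding eventually_at_top_linorder using assms(1) by (auto intro: less_le_trans monoD)
qed

lemma mono_tendsto_Inf_at_bot:
  fixes f :: "'a::linorder \<Rightarrow> 'b::{conditionally_complete_linorder,linorder_topology}"
  assumes "mono f" "bdd_below (range f)"
  shows "(f \<longlongrightarrow> Inf (range f)) at_bot"
proof (rule decreasing_tendsto)
  show "eventually (\<lambda>s. Inf (range f) \<le> f s) at_bot"
    using assms(2) by (intro always_eventually allI cInf_lower) auto
  fix y assume "Inf (range f) < y"
  then obtain s0 where "f s0 < y"
    using cInf_less_iff[of "range f"] assms(2) by auto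
  then show "eventually (\<lambda>s. f s < y) at_bot"
    unfolding eventually_at_bot_linorder using assms(1) by (auto intro: le_less_trans monoD)
qed

lemma squashing_normalized_activation:
  fixes \<sigma> :: "real \<Rightarrow> real"
  assumes "mono \<sigma>" "bounded (range \<sigma>)" "\<sigma> a \<noteq> \<sigma> b"
  defines "l \<equiv> Inf (range \<sigma>)" and "u \<equiv> Sup (range \<sigma>)"
  shows "squashing (\<lambda>s. (\<sigma> s - l) / (u - l))"
proof -
  have above: "bdd_above (range \<sigma>)" and below: "bdd_below (range \<sigma>)"
    using assms(2) by (simp_all add: bounded_imp_bdd_above bounded_imp_bdd_below)
  have bounds: "l \<le> \<sigma> s" "\<sigma> s \<le> u" for s
    unfolding l_def u_def using above below by (auto intro: cInf_lower cSup_upper)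
  then have "l < u"
    using assms(3) by (metis antisym not_less order_trans)
  have lim: "(\<sigma> \<longlongrightarrow> l) at_bot" "(\<sigma> \<longlongrightarrow> u) at_top"
    unfolding l_def u_def using assms(1) above below
    by (simp_all add: mono_tendsto_Inf_at_bot mono_tendsto_Sup_at_top)
  have "((\<lambda>s. (\<sigma> s - l) / (u - l)) \<longlongrightarrow> (l - l) / (u - l)) at_bot"
    "((\<lambda>s. (\<sigma> s - l) / (u - l)) \<longlongrightarrow> (u - l) / (u - l)) at_top"
    using lim \<open>l < u\<close> by (intro tendsto_divide tendsto_diff tendsto_const; simp)+
  then show ?thesis
    unfolding squashing_def using bounds \<open>l < u\<close> by (simp add: divide_le_eq_1)
qed

lemma squashing_tails:
  assumes "squashing H" "\<eta> > 0"
  obtains L where "L > 0" "\<And>s. s \<le> -L \<Longrightarrow> H s < \<eta>" "\<And>s. L \<le> s \<Longrightarrow> 1 - \<eta> < H s"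
proof -
  have "eventually (\<lambda>s. H s < \<eta>) at_bot" "eventually (\<lambda>s. 1 - \<eta> < H s) at_top"
    using assms unfolding squashing_def by (auto intro: order_tendstoD)
  then obtain L1 L2 where "\<forall>s\<le>L1. H s < \<eta>" "\<forall>s\<ge>L2. 1 - \<eta> < H s"
    unfolding eventually_at_bot_linorder eventually_at_top_linorder by blast
  then show ?thesis
    using that[of "max 1 (max (-L1) L2)"] by auto
qed

section \<open>Uniform approximation by one-hidden-layer networks\<close>

definition seq_append :: "nat \<Rightarrow> (nat \<Rightarrow> 'a) \<Rightarrow> (nat \<Rightarrow> 'a) \<Rightarrow> nat \<Rightarrow> 'a" where
  "seq_append m f g i = (if i < m then f i else g (i - m))"

lemma sum_seq_append:
  "(\<Sum>i<m+n. seq_append m f g i) = (\<Sum>i<m. f i) + (\<Sum>i<n. (g i :: 'a::comm_monoid_add))"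
proof -
  have "(\<Sum>i<m+n. seq_append m f g i)
      = (\<Sum>i\<in>{0..<m}. seq_append m f g i) + (\<Sum>i\<in>{m..<m+n}. seq_append m f g i)"
    by (simp add: atLeast0LessThan[symmetric] sum.atLeastLessThan_concat)
  also have "(\<Sum>i\<in>{m..<m+n}. seq_append m f g i) = (\<Sum>i\<in>{0..<n}. seq_append m f g (i + m))"
    using sum.shift_bounds_nat_ivl[of "seq_append m f g" 0 m n] by (simp add: add.commute)
  finally show ?thesis
    by (simp add: seq_append_def atLeast0LessThan)
qed

definition ridge_net ::
  "(real \<Rightarrow> real) \<Rightarrow> nat \<Rightarrow> (nat \<Rightarrow> real) \<Rightarrow> (nat \<Rightarrow> 'a::real_inner) \<Rightarrow> (nat \<Rightarrow> real) \<Rightarrow> 'a \<Rightarrow> real" where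
  "ridge_net \<sigma> T a b c x = (\<Sum>s<T. a s * \<sigma> (b s \<bullet> x + c s))"

lemma ridge_net_seq_append:
  "ridge_net \<sigma> (m + n) (seq_append m a a') (seq_append m b b') (seq_append m c c') x
     = ridge_net \<sigma> m a b c x + ridge_net \<sigma> n a' b' c' x"
proof -
  have "ridge_net \<sigma> (m + n) (seq_append m a a') (seq_append m b b') (seq_append m c c') x
      = (\<Sum>s<m+n. seq_append m (\<lambda>s. a s * \<sigma> (b s \<bullet> x + c s)) (\<lambda>s. a' s * \<sigma> (b' s \<bullet> x + c' s)) s)"
    unfolding ridge_net_def by (intro sum.cong) (auto simp: seq_append_def)
  then show ?thesis
    by (simp add: sum_seq_append ridge_net_def)
qed

lemma ridge_net_pad:
  assumes "T \<le> T'"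
  shows "ridge_net \<sigma> T' (\<lambda>s. if s < T then a s else 0) b c x = ridge_net \<sigma> T a b c x"
  unfolding ridge_net_def using assms by (intro sum.mono_neutral_cong_right) auto

definition net_approximable :: "(real \<Rightarrow> real) \<Rightarrow> 'a::real_inner set \<Rightarrow> ('a \<Rightarrow> real) \<Rightarrow> bool" where
  "net_approximable \<sigma> S f \<longleftrightarrow> (\<forall>\<delta>>0. \<exists>T a b c. \<forall>x\<in>S. \<bar>f x - ridge_net \<sigma> T a b c x\<bar> < \<delta>)"

lemma net_approximable_ridge_net: "net_approximable \<sigma> S (ridge_net \<sigma> T a b c)"
  unfolding net_approximable_def
  by (intro allI impI exI[of _ T] exI[of _ a] exI[of _ b] exI[of _ c]) simp

lemma net_approximable_zero: "net_approximable \<sigma> S (\<lambda>x. 0)"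
  using net_approximable_ridge_net[of \<sigma> S 0] unfolding ridge_net_def[abs_def] by simp

lemma net_approximable_neuron: "net_approximable \<sigma> S (\<lambda>x. \<sigma> (b \<bullet> x + c))"
  using net_approximable_ridge_net[of \<sigma> S 1 "\<lambda>_. 1" "\<lambda>_. b" "\<lambda>_. c"]
  unfolding ridge_net_def[abs_def] by simp

lemma net_approximable_uniform_limit:
  assumes "\<And>\<delta>. \<delta> > 0 \<Longrightarrow> \<exists>g. net_approximable \<sigma> S g \<and> (\<forall>x\<in>S. \<bar>f x - g x\<bar> < \<delta>)"
  shows "net_approximable \<sigma> S f"
  unfolding net_approximable_def
proof (intro allI impI)
  fix \<delta> :: real assume "\<delta> > 0"
  then obtain g where g: "net_approximable \<sigma> S g" "\<forall>x\<in>S. \<bar>f x - g x\<bar> < \<delta>/2"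
    using assms[of "\<delta>/2"] by auto
  then obtain T a b c where "\<forall>x\<in>S. \<bar>g x - ridge_net \<sigma> T a b c x\<bar> < \<delta>/2"
    using \<open>\<delta> > 0\<close> unfolding net_approximable_def by (meson half_gt_zero)
  with g(2) have "\<forall>x\<in>S. \<bar>f x - ridge_net \<sigma> T a b c x\<bar> < \<delta>"
    by (smt (verit, best) field_sum_of_halves)
  then show "\<exists>T a b c. \<forall>x\<in>S. \<bar>f x - ridge_net \<sigma> T a b c x\<bar> < \<delta>"
    by blast
qed

lemma net_approximable_add:
  assumes "net_approximable \<sigma> S f" "net_approximable \<sigma> S g"
  shows "net_approximable \<sigma> S (\<lambda>x. f x + g x)"
  unfolding net_approximable_def
proof (intro allI impI)
  fix \<delta> :: real assume "\<delta> > 0"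
  then obtain m a b c n a' b' c' where
    f: "\<forall>x\<in>S. \<bar>f x - ridge_net \<sigma> m a b c x\<bar> < \<delta>/2" and
    g: "\<forall>x\<in>S. \<bar>g x - ridge_net \<sigma> n a' b' c' x\<bar> < \<delta>/2"
    using assms unfolding net_approximable_def by (meson half_gt_zero)
  have "\<forall>x\<in>S. \<bar>f x + g x
      - ridge_net \<sigma> (m + n) (seq_append m a a') (seq_append m b b') (seq_append m c c') x\<bar> < \<delta>"
    unfolding ridge_net_seq_append using f g by (smt (verit, best) field_sum_of_halves)
  then show "\<exists>T a b c. \<forall>x\<in>S. \<bar>f x + g x - ridge_net \<sigma> T a b c x\<bar> < \<delta>"
    by blast
qed

lemma net_approximable_cmult:
  assumes "net_approximable \<sigma> S f"
  shows "net_approximable \<sigma> S (\<lambda>x. k * f x)"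
  unfolding net_approximable_def
proof (intro allI impI)
  fix \<delta> :: real assume "\<delta> > 0"
  then obtain T a b c where net: "\<forall>x\<in>S. \<bar>f x - ridge_net \<sigma> T a b c x\<bar> < \<delta> / (\<bar>k\<bar> + 1)"
    using assms unfolding net_approximable_def
    by (meson divide_pos_pos abs_ge_zero add_nonneg_pos zero_less_one)
  have "\<bar>k * f x - ridge_net \<sigma> T (\<lambda>s. k * a s) b c x\<bar> < \<delta>" if "x \<in> S" for x
  proof -
    have "\<bar>k * f x - ridge_net \<sigma> T (\<lambda>s. k * a s) b c x\<bar> = \<bar>k\<bar> * \<bar>f x - ridge_net \<sigma> T a b c x\<bar>"
      by (simp add: ridge_net_def sum_distrib_left mult.assoc abs_mult[symmetric]
          right_diff_distrib)
    also have "\<dots> \<le> \<bar>k\<bar> * (\<delta> / (\<bar>k\<bar> + 1))"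
      using net that by (intro mult_left_mono) auto
    also have "\<dots> < \<delta>"
      using \<open>\<delta> > 0\<close> by (simp add: field_simps)
    finally show ?thesis .
  qed
  then show "\<exists>T a b c. \<forall>x\<in>S. \<bar>k * f x - ridge_net \<sigma> T a b c x\<bar> < \<delta>"
    by blast
qed

lemma net_approximable_diff:
  assumes "net_approximable \<sigma> S f" "net_approximable \<sigma> S g"
  shows "net_approximable \<sigma> S (\<lambda>x. f x - g x)"
  using net_approximable_add[OF assms(1) net_approximable_cmult[OF assms(2), of "-1"]] by simp

lemma net_approximable_sum:
  fixes n :: nat
  assumes "\<And>i. i < n \<Longrightarrow> net_approximable \<sigma> S (f i)"
  shows "net_approximable \<sigma> S (\<lambda>x. \<Sum>i<n. f i x)"
  using assms by (induction n) (simp_all add: net_approximable_zero net_approximable_add)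

lemma net_approximable_bounded:
  assumes "compact S" "continuous_on UNIV \<sigma>" "net_approximable \<sigma> S f"
  shows "\<exists>B. \<forall>x\<in>S. \<bar>f x\<bar> \<le> B"
proof -
  obtain T a b c where net: "\<forall>x\<in>S. \<bar>f x - ridge_net \<sigma> T a b c x\<bar> < 1"
    using assms(3) unfolding net_approximable_def by (meson zero_less_one)
  have "continuous_on S (ridge_net \<sigma> T a b c)"
    unfolding ridge_net_def[abs_def]
    by (intro continuous_intros continuous_on_compose2[OF assms(2)]) auto
  then have "bounded (ridge_net \<sigma> T a b c ` S)"
    using assms(1) by (intro compact_imp_bounded compact_continuous_image)
  then obtain B where "\<forall>x\<in>S. \<bar>ridge_net \<sigma> T a b c x\<bar> \<le> B"
    unfolding bounded_real by blast
  with net have "\<forall>x\<in>S. \<bar>f x\<bar> \<le> B + 1"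
    by (smt (verit, best))
  then show ?thesis ..
qed

lemma net_approximable_family_bounded:
  fixes n :: nat
  assumes "compact S" "continuous_on UNIV \<sigma>" "\<forall>i<n. net_approximable \<sigma> S (P i)"
  obtains B where "B \<ge> 0" "\<And>i x. i < n \<Longrightarrow> x \<in> S \<Longrightarrow> \<bar>P i x\<bar> \<le> B"
proof -
  have "\<forall>i<n. \<exists>B. \<forall>x\<in>S. \<bar>P i x\<bar> \<le> B"
    using assms net_approximable_bounded by blast
  then obtain Bf where Bf: "\<And>i x. i < n \<Longrightarrow> x \<in> S \<Longrightarrow> \<bar>P i x\<bar> \<le> Bf i"
    by metis
  have "\<bar>P i x\<bar> \<le> (\<Sum>j<n. \<bar>Bf j\<bar>)" if "i < n" "x \<in> S" for i x
  proof -
    have "\<bar>Bf i\<bar> \<le> (\<Sum>j<n. \<bar>Bf j\<bar>)"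
      using that(1) by (intro member_le_sum) auto
    then show ?thesis
      using Bf[OF that] abs_ge_self[of "Bf i"] by linarith
  qed
  then show ?thesis
    using that[of "\<Sum>j<n. \<bar>Bf j\<bar>"] by (simp add: sum_nonneg)
qed

lemma net_approximable_common_width:
  fixes n :: nat
  assumes "\<forall>i<n. net_approximable \<sigma> S (P i)" "e > 0"
  obtains W a b c where "W > 0"
    "\<And>i x. i < n \<Longrightarrow> x \<in> S \<Longrightarrow> \<bar>P i x - ridge_net \<sigma> W (a i) (b i) (c i) x\<bar> < e"
proof -
  have "\<forall>i<n. \<exists>T a b c. \<forall>x\<in>S. \<bar>P i x - ridge_net \<sigma> T a b c x\<bar> < e"
    using assms unfolding net_approximable_def by blast
  then obtain Tf af bf cf where net:
    "\<And>i x. i < n \<Longrightarrow> x \<in> S \<Longrightarrow> \<bar>P i x - ridge_net \<sigma> (Tf i) (af i) (bf i) (cf i) x\<bar> < e"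
    by metis
  define W where "W = 1 + (\<Sum>i<n. Tf i)"
  have "Tf i \<le> W" if "i < n" for i
  proof -
    have "Tf i \<le> (\<Sum>i<n. Tf i)"
      using that by (intro member_le_sum) auto
    then show ?thesis
      by (simp add: W_def)
  qed
  then show ?thesis
    using that[of W "\<lambda>i s. if s < Tf i then af i s else 0" bf cf] net
    by (simp add: W_def ridge_net_pad)
qed

lemma activation_squashing:
  assumes "\<sigma> = relu \<or> ((\<exists>a b. \<sigma> a \<noteq> \<sigma> b) \<and> continuous_on UNIV \<sigma> \<and> bounded (range \<sigma>) \<and> mono \<sigma>)"
  shows "\<exists>H. squashing H \<and> (\<forall>b c. net_approximable \<sigma> S (\<lambda>x. H (b \<bullet> x + c)))"
  using assms
proof
  assume "\<sigma> = relu"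
  then have "net_approximable \<sigma> S (\<lambda>x. relu (b \<bullet> x + c) - relu (b \<bullet> x + c - 1))" for b c
    using net_approximable_diff[OF net_approximable_neuron net_approximable_neuron,
        of \<sigma> S b c b "c - 1"]
    by (simp add: add_diff_eq)
  then show ?thesis
    using squashing_relu_difference by blast
next
  assume "(\<exists>a b. \<sigma> a \<noteq> \<sigma> b) \<and> continuous_on UNIV \<sigma> \<and> bounded (range \<sigma>) \<and> mono \<sigma>"
  then obtain a b where "\<sigma> a \<noteq> \<sigma> b" "bounded (range \<sigma>)" "mono \<sigma>"
    by blast
  define l where "l = Inf (range \<sigma>)"
  define u where "u = Sup (range \<sigma>)"
  obtain c0 where "\<sigma> c0 \<noteq> 0"
    using \<open>\<sigma> a \<noteq> \<sigma> b\<close> by metis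
  have const: "l / (u - l) / \<sigma> c0 * \<sigma> (0 \<bullet> x + c0) = l / (u - l)" for x :: 'a
    using \<open>\<sigma> c0 \<noteq> 0\<close> by simp
  have "(\<sigma> (b \<bullet> x + c) - l) / (u - l)
      = inverse (u - l) * \<sigma> (b \<bullet> x + c) - l / (u - l) / \<sigma> c0 * \<sigma> (0 \<bullet> x + c0)" for b c and x :: 'a
    unfolding const by (simp add: divide_inverse algebra_simps)
  then have "net_approximable \<sigma> S (\<lambda>x. (\<sigma> (b \<bullet> x + c) - l) / (u - l))" for b c
    by (simp only:) (intro net_approximable_diff net_approximable_cmult net_approximable_neuron)
  then show ?thesis
    using squashing_normalized_activation[OF \<open>mono \<sigma>\<close> \<open>bounded (range \<sigma>)\<close> \<open>\<sigma> a \<noteq> \<sigma> b\<close>]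
    unfolding l_def u_def by blast
qed

section \<open>Staircase approximation of ridge functions\<close>

lemma grid_cell:
  fixes a h t :: real
  assumes "0 < n" "a \<le> t" "t \<le> a + real n * h"
  shows "\<exists>j<n. a + real j * h \<le> t \<and> t \<le> a + real (Suc j) * h"
  using assms
proof (induction n rule: nat_induct_non_zero)
  case 1
  then show ?case by auto
next
  case (Suc n)
  show ?case
  proof (cases "t \<le> a + real n * h")
    case True
    with Suc show ?thesis by (metis less_SucI)
  next
    case False
    with Suc.prems show ?thesis by (metis lessI nle_le)
  qed
qed

lemma grid_midpoint_gap:
  fixes a h t :: real
  assumes "h > 0" "a + real j * h \<le> t" "t \<le> a + real (Suc j) * h" "k \<noteq> j"
  shows "h / 2 \<le> \<bar>t - (a + (real k + 1/2) * h)\<bar>" "0 < t - (a + (real k + 1/2) * h) \<longleftrightarrow> k < j"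
proof -
  let ?u = "t - (a + (real k + 1/2) * h)"
  have "h / 2 \<le> \<bar>?u\<bar> \<and> (0 < ?u \<longleftrightarrow> k < j)"
  proof (cases "k < j")
    case True
    then have "real (Suc k) * h \<le> real j * h"
      using assms(1) by (intro mult_right_mono) auto
    with True show ?thesis
      using assms(1,2) by (simp add: algebra_simps)
  next
    case False
    with assms(4) have "real (Suc j) * h \<le> real k * h"
      using assms(1) by (intro mult_right_mono) auto
    with False show ?thesis
      using assms(1,3) by (simp add: algebra_simps)
  qed
  then show "h / 2 \<le> \<bar>?u\<bar>" "0 < ?u \<longleftrightarrow> k < j"
    by auto
qed

lemma squashing_near_unit_step:
  fixes H :: "real \<Rightarrow> real"
  assumes "\<And>s. 0 \<le> H s \<and> H s \<le> 1"
    and "\<And>s. s \<le> -L \<Longrightarrow> H s < \<eta>" "\<And>s. L \<le> s \<Longrightarrow> 1 - \<eta> < H s"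
    and "\<kappa> > 0" "\<kappa> * r = L" "r \<le> \<bar>u\<bar>"
  shows "\<bar>H (\<kappa> * u) - of_bool (0 < u)\<bar> \<le> \<eta>"
proof (cases "0 < u")
  case True
  then have "\<kappa> * r \<le> \<kappa> * u"
    using assms(4,6) by (intro mult_left_mono) auto
  then have "L \<le> \<kappa> * u"
    using assms(5) by simp
  then show ?thesis
    using True assms(1,3)[of "\<kappa> * u"] by simp
next
  case False
  then have "\<kappa> * r \<le> \<kappa> * - u"
    using assms(4,6) by (intro mult_left_mono) auto
  then have "\<kappa> * u \<le> -L"
    using assms(5) by simp
  then show ?thesis
    using False assms(1,2)[of "\<kappa> * u"] by simp
qed

lemma squashing_sum_near_partial_sum:
  fixes H :: "real \<Rightarrow> real" and D :: "nat \<Rightarrow> real" and t h L \<kappa> \<eta> d :: real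
  assumes H01: "\<And>s. 0 \<le> H s \<and> H s \<le> 1"
    and low: "\<And>s. s \<le> -L \<Longrightarrow> H s < \<eta>" and high: "\<And>s. L \<le> s \<Longrightarrow> 1 - \<eta> < H s"
    and scale: "h > 0" "\<kappa> * h = 2 * L" "L > 0"
    and cell: "j < n" "a + real j * h \<le> t" "t \<le> a + real (Suc j) * h"
    and D: "\<And>k. k < n \<Longrightarrow> \<bar>D k\<bar> \<le> d"
  shows "\<bar>(\<Sum>k<n. D k * H (\<kappa> * (t - (a + (real k + 1/2) * h)))) - (\<Sum>k<j. D k)\<bar> \<le> d + real n * d * \<eta>"
proof -
  define r where "r k = H (\<kappa> * (t - (a + (real k + 1/2) * h))) - of_bool (k < j)" for k
  have "\<kappa> > 0"
    using scale by (metis mult_pos_pos zero_less_mult_pos2 zero_less_numeral)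
  have half_step: "\<kappa> * (h / 2) = L"
    using scale by simp
  have r_small: "\<bar>r k\<bar> \<le> \<eta>" if "k \<noteq> j" for k
  proof -
    have "\<bar>H (\<kappa> * (t - (a + (real k + 1/2) * h))) - of_bool (0 < t - (a + (real k + 1/2) * h))\<bar> \<le> \<eta>"
      by (rule squashing_near_unit_step[OF H01 low high \<open>\<kappa> > 0\<close> half_step
            grid_midpoint_gap(1)[OF scale(1) cell(2,3) that]])
    then show ?thesis
      unfolding r_def grid_midpoint_gap(2)[OF scale(1) cell(2,3) that] .
  qed
  have partial: "(\<Sum>k<j. D k) = (\<Sum>k<n. D k * of_bool (k < j))"
    using cell(1) by (intro sum.mono_neutral_cong_left) auto
  have "(\<Sum>k<n. D k * H (\<kappa> * (t - (a + (real k + 1/2) * h)))) - (\<Sum>k<j. D k)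
      = (\<Sum>k<n. D k * r k)"
    unfolding partial r_def right_diff_distrib sum_subtractf ..
  also have "\<dots> = D j * r j + (\<Sum>k\<in>{..<n} - {j}. D k * r k)"
    using cell(1) by (simp add: sum.remove)
  also have "\<bar>\<dots>\<bar> \<le> d + (\<Sum>k\<in>{..<n} - {j}. d * \<eta>)"
  proof (rule order_trans[OF abs_triangle_ineq add_mono])
    have "\<bar>r j\<bar> \<le> 1"
      unfolding r_def using H01 by simp
    then show "\<bar>D j * r j\<bar> \<le> d"
      unfolding abs_mult using D[OF cell(1)] by (meson abs_ge_zero mult_left_le order_trans)
    show "\<bar>\<Sum>k\<in>{..<n} - {j}. D k * r k\<bar> \<le> (\<Sum>k\<in>{..<n} - {j}. d * \<eta>)"
      using D r_small
      by (intro order_trans[OF sum_abs sum_mono])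
        (auto simp: abs_mult intro!: mult_mono order_trans[OF abs_ge_zero])
  qed
  also have "\<dots> \<le> d + real n * d * \<eta>"
  proof -
    have "0 \<le> d" "0 \<le> \<eta>"
      using D[OF cell(1)] r_small[of "Suc j"] abs_ge_zero[of "D j"] abs_ge_zero[of "r (Suc j)"]
      by linarith+
    then have "0 \<le> d * \<eta>"
      by simp
    then have "(\<Sum>k\<in>{..<n} - {j}. d * \<eta>) \<le> (\<Sum>k<n. d * \<eta>)"
      by (intro sum_mono2) auto
    then show ?thesis
      by (simp add: mult.assoc)
  qed
  finally show ?thesis .
qed

lemma uniformly_continuous_grid:
  fixes g :: "real \<Rightarrow> real"
  assumes "a < b" "continuous_on {a..b} g" "\<delta> > 0"
  obtains n :: nat and h where "n > 0" "h > 0" "a + real n * h = b"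
    "\<And>k t. k < n \<Longrightarrow> a + real k * h \<le> t \<Longrightarrow> t \<le> a + real (Suc k) * h
      \<Longrightarrow> \<bar>g t - g (a + real k * h)\<bar> < \<delta>"
proof -
  obtain e where e: "e > 0"
    "\<And>x x'. x \<in> {a..b} \<Longrightarrow> x' \<in> {a..b} \<Longrightarrow> dist x' x < e \<Longrightarrow> dist (g x') (g x) < \<delta>"
    using compact_uniformly_continuous[OF assms(2) compact_Icc] assms(3)
    unfolding uniformly_continuous_on_def by metis
  define n :: nat where "n = nat \<lceil>(b - a) / e\<rceil> + 1"
  define h where "h = (b - a) / n"
  have "n > 0" "h > 0" and grid_end: "a + real n * h = b"
    using assms(1) by (simp_all add: n_def h_def)
  have "(b - a) / e < real n"
    unfolding n_def by linarith
  then have "h < e"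
    using \<open>e > 0\<close> \<open>n > 0\<close> by (simp add: h_def field_simps)
  have "\<bar>g t - g (a + real k * h)\<bar> < \<delta>"
    if "k < n" "a + real k * h \<le> t" "t \<le> a + real (Suc k) * h" for k t
  proof -
    have "real (Suc k) * h \<le> real n * h"
      using that(1) \<open>h > 0\<close> by (intro mult_right_mono) auto
    moreover have "0 \<le> real k * h"
      using \<open>h > 0\<close> by simp
    ultimately have "a + real k * h \<in> {a..b}" "t \<in> {a..b}"
      using that(2,3) grid_end by auto
    then show ?thesis
      using e(2)[of "a + real k * h" t] that(2,3) \<open>h < e\<close> by (simp add: dist_real_def algebra_simps)
  qed
  then show ?thesis
    using that \<open>n > 0\<close> \<open>h > 0\<close> grid_end by blast
qed

lemma squashing_staircase_approx:
  fixes g :: "real \<Rightarrow> real"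
  assumes "squashing H" "a < b" "continuous_on {a..b} g" "\<delta> > 0"
  shows "\<exists>(n::nat) \<kappa> c D. \<forall>t\<in>{a..b}. \<bar>g t - (g a + (\<Sum>k<n. D k * H (\<kappa> * (t - c k))))\<bar> < \<delta>"
proof -
  obtain n :: nat and h where "n > 0" "h > 0" and grid_end: "a + real n * h = b" and close:
    "\<And>k t. k < n \<Longrightarrow> a + real k * h \<le> t \<Longrightarrow> t \<le> a + real (Suc k) * h
      \<Longrightarrow> \<bar>g t - g (a + real k * h)\<bar> < \<delta>/3"
    using uniformly_continuous_grid[OF assms(2,3), of "\<delta>/3"] assms(4) by auto
  define tk where "tk k = a + real k * h" for k :: nat
  define D where "D k = g (tk (Suc k)) - g (tk k)" for k
  have D: "\<bar>D k\<bar> \<le> \<delta>/3" if "k < n" for k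
    using close[OF that, of "tk (Suc k)"] \<open>h > 0\<close> by (simp add: D_def tk_def)
  define \<eta> where "\<eta> = 1 / (real n + 1)"
  obtain L where L: "L > 0" "\<And>s. s \<le> -L \<Longrightarrow> H s < \<eta>" "\<And>s. L \<le> s \<Longrightarrow> 1 - \<eta> < H s"
    using squashing_tails[OF assms(1), of \<eta>] by (auto simp: \<eta>_def)
  have H01: "\<And>s. 0 \<le> H s \<and> H s \<le> 1"
    using assms(1) by (simp add: squashing_def)
  (* On the cell [tk j, tk (j+1)] we have g t \<approx> g (tk j) = g a + sum_{k<j} D k, and
     H (2 L/h (t - c k)) is within \<eta> of the unit step at the midpoint c k of the k-th cell. *)
  show ?thesis
  proof (rule exI[of _ n], rule exI[of _ "2 * L / h"], rule exI[of _ "\<lambda>k. a + (real k + 1/2) * h"],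
      rule exI[of _ D], rule ballI)
    fix t assume t: "t \<in> {a..b}"
    then obtain j where j: "j < n" "tk j \<le> t" "t \<le> tk (Suc j)"
      using grid_cell[OF \<open>n > 0\<close>, of a t h] grid_end by (auto simp: tk_def)
    have "(\<Sum>k<j. D k) = g (tk j) - g a"
      unfolding D_def using sum_lessThan_telescope[of "\<lambda>k. g (tk k)" j] by (simp add: tk_def)
    moreover have "\<bar>(\<Sum>k<n. D k * H (2 * L / h * (t - (a + (real k + 1/2) * h)))) - (\<Sum>k<j. D k)\<bar>
        \<le> \<delta>/3 + real n * (\<delta>/3) * \<eta>"
      using H01 L \<open>h > 0\<close> j D unfolding tk_def by (intro squashing_sum_near_partial_sum) auto
    moreover have "real n * (\<delta>/3) * \<eta> < \<delta>/3"
      using \<open>\<delta> > 0\<close> by (simp add: \<eta>_def field_simps)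
    moreover have "\<bar>g t - g (tk j)\<bar> < \<delta>/3"
      using close[OF j(1)] j(2,3) by (simp add: tk_def)
    ultimately show
      "\<bar>g t - (g a + (\<Sum>k<n. D k * H (2 * L / h * (t - (a + (real k + 1/2) * h)))))\<bar> < \<delta>"
      unfolding abs_less_iff abs_le_iff by linarith
  qed
qed

lemma net_approximable_const:
  assumes "squashing H" "\<And>b c. net_approximable \<sigma> S (\<lambda>x. H (b \<bullet> x + c))"
  shows "net_approximable \<sigma> S (\<lambda>x. k)"
proof (rule net_approximable_uniform_limit)
  (* k is the uniform limit of the constant ridges k H(0 \<bullet> x + c) as c tends to infinity. *)
  fix \<delta> :: real assume "\<delta> > 0"
  moreover have "(H \<longlongrightarrow> 1) at_top"
    using assms(1) by (simp add: squashing_def)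
  ultimately have "eventually (\<lambda>c. dist (H c) 1 < \<delta> / (\<bar>k\<bar> + 1)) at_top"
    by (intro tendstoD) auto
  then obtain c where c: "\<bar>H c - 1\<bar> < \<delta> / (\<bar>k\<bar> + 1)"
    unfolding eventually_at_top_linorder dist_real_def by blast
  have "\<bar>k - k * H c\<bar> = \<bar>k\<bar> * \<bar>H c - 1\<bar>"
    by (simp add: abs_mult[symmetric] algebra_simps)
  also have "\<dots> \<le> \<bar>k\<bar> * (\<delta> / (\<bar>k\<bar> + 1))"
    using c by (intro mult_left_mono) auto
  also have "\<dots> < \<delta>"
    using \<open>\<delta> > 0\<close> by (simp add: field_simps)
  finally have "\<forall>x\<in>S. \<bar>k - k * H (0 \<bullet> x + c)\<bar> < \<delta>"
    by simp
  then show "\<exists>g. net_approximable \<sigma> S g \<and> (\<forall>x\<in>S. \<bar>k - g x\<bar> < \<delta>)"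
    using net_approximable_cmult[OF assms(2)] by blast
qed

lemma net_approximable_ridge_function:
  assumes "bounded S" "squashing H" "\<And>b c. net_approximable \<sigma> S (\<lambda>x. H (b \<bullet> x + c))"
    and "continuous_on UNIV \<phi>"
  shows "net_approximable \<sigma> S (\<lambda>x. \<phi> (w \<bullet> x))"
proof (rule net_approximable_uniform_limit)
  fix \<delta> :: real assume "\<delta> > 0"
  obtain B where B: "\<And>x. x \<in> S \<Longrightarrow> norm x \<le> B"
    using assms(1) bounded_iff by blast
  define R where "R = norm w * \<bar>B\<bar> + 1"
  have "R > 0"
    by (simp add: R_def add_nonneg_pos)
  have inner_bound: "w \<bullet> x \<in> {-R..R}" if "x \<in> S" for x
  proof -
    have "\<bar>w \<bullet> x\<bar> \<le> norm w * norm x"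
      by (rule Cauchy_Schwarz_ineq2)
    also have "\<dots> \<le> norm w * \<bar>B\<bar>"
      using B[OF that] by (intro mult_left_mono) auto
    finally show ?thesis
      by (auto simp: R_def abs_le_iff)
  qed
  have "\<exists>(n::nat) \<kappa> c D. \<forall>t\<in>{-R..R}. \<bar>\<phi> t - (\<phi> (-R) + (\<Sum>k<n. D k * H (\<kappa> * (t - c k))))\<bar> < \<delta>"
    using \<open>R > 0\<close> \<open>\<delta> > 0\<close> continuous_on_subset[OF assms(4)]
    by (intro squashing_staircase_approx assms(2)) auto
  then obtain n :: nat and \<kappa> c D where approx:
    "\<forall>t\<in>{-R..R}. \<bar>\<phi> t - (\<phi> (-R) + (\<Sum>k<n. D k * H (\<kappa> * (t - c k))))\<bar> < \<delta>"
    by blast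
  define g where "g x = \<phi> (-R) + (\<Sum>k<n. D k * H ((\<kappa> *\<^sub>R w) \<bullet> x + - \<kappa> * c k))" for x
  have "net_approximable \<sigma> S g"
    unfolding g_def
    by (intro net_approximable_add net_approximable_const[OF assms(2,3)] net_approximable_sum
        net_approximable_cmult assms(3))
  moreover have "\<bar>\<phi> (w \<bullet> x) - g x\<bar> < \<delta>" if "x \<in> S" for x
  proof -
    have "g x = \<phi> (-R) + (\<Sum>k<n. D k * H (\<kappa> * (w \<bullet> x - c k)))"
      by (simp add: g_def algebra_simps)
    then show ?thesis
      using approx inner_bound[OF that] by simp
  qed
  ultimately show "\<exists>g. net_approximable \<sigma> S g \<and> (\<forall>x\<in>S. \<bar>\<phi> (w \<bullet> x) - g x\<bar> < \<delta>)"
    by blast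
qed

section \<open>Sums of exponentials\<close>

inductive_set exp_sums :: "('a::real_inner \<Rightarrow> real) set" where
  exp_sums_exp: "(\<lambda>z. exp (w \<bullet> z)) \<in> exp_sums"
| exp_sums_add: "f \<in> exp_sums \<Longrightarrow> g \<in> exp_sums \<Longrightarrow> (\<lambda>z. f z + g z) \<in> exp_sums"
| exp_sums_cmult: "f \<in> exp_sums \<Longrightarrow> (\<lambda>z. k * f z) \<in> exp_sums"

lemma exp_sums_const: "(\<lambda>z. k) \<in> exp_sums"
  using exp_sums_cmult[OF exp_sums_exp[of 0], of k] by simp

lemma exp_sums_mult_exp: "f \<in> exp_sums \<Longrightarrow> (\<lambda>z. exp (w \<bullet> z) * f z) \<in> exp_sums"
proof (induction rule: exp_sums.induct)
  case (exp_sums_exp v)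
  then show ?case
    using exp_sums.exp_sums_exp[of "w + v"] by (simp add: inner_add_left exp_add)
next
  case (exp_sums_add f g)
  then show ?case
    using exp_sums.exp_sums_add by (simp add: distrib_left)
next
  case (exp_sums_cmult f k)
  then show ?case
    using exp_sums.exp_sums_cmult[of _ k] by (simp add: mult.left_commute)
qed

lemma exp_sums_mult: "f \<in> exp_sums \<Longrightarrow> g \<in> exp_sums \<Longrightarrow> (\<lambda>z. f z * g z) \<in> exp_sums"
proof (induction rule: exp_sums.induct)
  case (exp_sums_exp w)
  then show ?case
    by (rule exp_sums_mult_exp)
next
  case (exp_sums_add f1 f2)
  then show ?case
    using exp_sums.exp_sums_add by (simp add: distrib_right)
next
  case (exp_sums_cmult f k)
  then show ?case
    using exp_sums.exp_sums_cmult[of _ k] by (simp add: mult.assoc)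
qed

lemma exp_sums_continuous_on: "f \<in> exp_sums \<Longrightarrow> continuous_on S f"
  by (induction rule: exp_sums.induct) (intro continuous_intros | assumption)+

lemma exp_sums_separating:
  assumes "z \<noteq> z'"
  shows "\<exists>f\<in>exp_sums. f z \<noteq> f z'"
proof -
  have "(z - z') \<bullet> z - (z - z') \<bullet> z' > 0"
    using assms by (simp add: inner_diff_right[symmetric])
  then have "exp ((z - z') \<bullet> z) \<noteq> exp ((z - z') \<bullet> z')"
    by simp
  then show ?thesis
    by (intro bexI[OF _ exp_sums_exp])
qed

lemma exp_sums_dense:
  assumes "compact K" "continuous_on K f" "\<epsilon> > 0"
  shows "\<exists>g\<in>exp_sums. \<forall>z\<in>K. \<bar>f z - g z\<bar> < \<epsilon>"
proof -
  have "\<exists>g. g \<in> exp_sums \<and> (\<forall>z\<in>K. \<bar>f z - g z\<bar> < \<epsilon>)"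
  proof (rule Stone_Weierstrass_HOL[OF assms(1) _ _ _ _ _ assms(2,3)])
    show "(\<lambda>z. c) \<in> exp_sums" for c
      by (rule exp_sums_const)
    show "continuous_on K g" if "g \<in> exp_sums" for g
      using that by (rule exp_sums_continuous_on)
    show "(\<lambda>z. g z + h z) \<in> exp_sums" if "g \<in> exp_sums \<and> h \<in> exp_sums" for g h
      using that by (simp add: exp_sums_add)
    show "(\<lambda>z. g z * h z) \<in> exp_sums" if "g \<in> exp_sums \<and> h \<in> exp_sums" for g h
      using that by (simp add: exp_sums_mult)
    show "\<exists>g. g \<in> exp_sums \<and> g z \<noteq> g z'" if "z \<in> K \<and> z' \<in> K \<and> z \<noteq> z'" for z z'
      using exp_sums_separating[of z z'] that by blast
  qed
  then show ?thesis
    by blast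
qed

section \<open>Differences of Gram forms\<close>

definition net_gram_difference ::
  "(real \<Rightarrow> real) \<Rightarrow> 'a::real_inner set \<Rightarrow> ('a \<Rightarrow> 'a \<Rightarrow> real) \<Rightarrow> bool" where
  "net_gram_difference \<sigma> S k \<longleftrightarrow> (\<exists>(n::nat) P (m::nat) Q.
     (\<forall>i<n. net_approximable \<sigma> S (P i)) \<and> (\<forall>i<m. net_approximable \<sigma> S (Q i)) \<and>
     (\<forall>x x'. k x x' = (\<Sum>i<n. P i x * P i x') - (\<Sum>i<m. Q i x * Q i x')))"

lemma net_gram_differenceI:
  fixes n m :: nat
  assumes "\<forall>i<n. net_approximable \<sigma> S (P i)" "\<forall>i<m. net_approximable \<sigma> S (Q i)"
    "\<And>x x'. k x x' = (\<Sum>i<n. P i x * P i x') - (\<Sum>i<m. Q i x * Q i x')"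
  shows "net_gram_difference \<sigma> S k"
  unfolding net_gram_difference_def using assms by blast

lemma net_gram_differenceE:
  assumes "net_gram_difference \<sigma> S k"
  obtains n :: nat and P and m :: nat and Q where
    "\<forall>i<n. net_approximable \<sigma> S (P i)" "\<forall>i<m. net_approximable \<sigma> S (Q i)"
    "\<And>x x'. k x x' = (\<Sum>i<n. P i x * P i x') - (\<Sum>i<m. Q i x * Q i x')"
  using assms unfolding net_gram_difference_def by blast

lemma sum_seq_append_gram:
  "(\<Sum>i<m+n. seq_append m P Q i x * seq_append m P Q i x')
     = (\<Sum>i<m. P i x * P i x') + (\<Sum>i<n. Q i x * Q i x' :: real)"
proof -
  have "seq_append m P Q i x * seq_append m P Q i x'
      = seq_append m (\<lambda>i. P i x * P i x') (\<lambda>i. Q i x * Q i x') i" for i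
    by (simp add: seq_append_def)
  then show ?thesis
    by (simp add: sum_seq_append)
qed

lemma net_gram_difference_add:
  assumes "net_gram_difference \<sigma> S k" "net_gram_difference \<sigma> S l"
  shows "net_gram_difference \<sigma> S (\<lambda>x x'. k x x' + l x x')"
proof -
  obtain n :: nat and P and m :: nat and Q
    where k: "\<forall>i<n. net_approximable \<sigma> S (P i)" "\<forall>i<m. net_approximable \<sigma> S (Q i)"
    "\<And>x x'. k x x' = (\<Sum>i<n. P i x * P i x') - (\<Sum>i<m. Q i x * Q i x')"
    using assms(1) by (rule net_gram_differenceE) blast
  obtain n' :: nat and P' and m' :: nat and Q'
    where l: "\<forall>i<n'. net_approximable \<sigma> S (P' i)" "\<forall>i<m'. net_approximable \<sigma> S (Q' i)"
    "\<And>x x'. l x x' = (\<Sum>i<n'. P' i x * P' i x') - (\<Sum>i<m'. Q' i x * Q' i x')"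
    using assms(2) by (rule net_gram_differenceE) blast
  show ?thesis
  proof (rule net_gram_differenceI)
    show "\<forall>i<n+n'. net_approximable \<sigma> S (seq_append n P P' i)"
      "\<forall>i<m+m'. net_approximable \<sigma> S (seq_append m Q Q' i)"
      using k(1,2) l(1,2) by (auto simp: seq_append_def)
    show "k x x' + l x x'
      = (\<Sum>i<n+n'. seq_append n P P' i x * seq_append n P P' i x')
        - (\<Sum>i<m+m'. seq_append m Q Q' i x * seq_append m Q Q' i x')" for x x'
      by (simp add: k(3) l(3) sum_seq_append_gram)
  qed
qed

lemma net_gram_difference_uminus:
  assumes "net_gram_difference \<sigma> S k"
  shows "net_gram_difference \<sigma> S (\<lambda>x x'. - k x x')"
proof -
  obtain n :: nat and P and m :: nat and Q
    where k: "\<forall>i<n. net_approximable \<sigma> S (P i)" "\<forall>i<m. net_approximable \<sigma> S (Q i)"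
    "\<And>x x'. k x x' = (\<Sum>i<n. P i x * P i x') - (\<Sum>i<m. Q i x * Q i x')"
    using assms by (rule net_gram_differenceE) blast
  show ?thesis
    by (rule net_gram_differenceI[OF k(2,1)]) (simp add: k(3))
qed

lemma net_gram_difference_nonneg_cmult:
  assumes "net_gram_difference \<sigma> S k" "c \<ge> 0"
  shows "net_gram_difference \<sigma> S (\<lambda>x x'. c * k x x')"
proof -
  obtain n :: nat and P and m :: nat and Q
    where k: "\<forall>i<n. net_approximable \<sigma> S (P i)" "\<forall>i<m. net_approximable \<sigma> S (Q i)"
    "\<And>x x'. k x x' = (\<Sum>i<n. P i x * P i x') - (\<Sum>i<m. Q i x * Q i x')"
    using assms(1) by (rule net_gram_differenceE) blast
  have sqrt_sq: "sqrt c * u * (sqrt c * v) = c * (u * v)" for u v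
    using assms(2) by (simp add: algebra_simps)
  show ?thesis
  proof (rule net_gram_differenceI)
    show "\<forall>i<n. net_approximable \<sigma> S (\<lambda>x. sqrt c * P i x)"
      "\<forall>i<m. net_approximable \<sigma> S (\<lambda>x. sqrt c * Q i x)"
      using k(1,2) by (simp_all add: net_approximable_cmult)
    show "c * k x x'
      = (\<Sum>i<n. sqrt c * P i x * (sqrt c * P i x'))
        - (\<Sum>i<m. sqrt c * Q i x * (sqrt c * Q i x'))" for x x'
      by (simp add: k(3) sqrt_sq sum_distrib_left right_diff_distrib)
  qed
qed

lemma net_gram_difference_cmult:
  assumes "net_gram_difference \<sigma> S k"
  shows "net_gram_difference \<sigma> S (\<lambda>x x'. c * k x x')"
proof (cases "c \<ge> 0")
  case True
  then show ?thesis
    using assms by (rule net_gram_difference_nonneg_cmult[rotated])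
next
  case False
  then have "net_gram_difference \<sigma> S (\<lambda>x x'. - ((- c) * k x x'))"
    using assms by (intro net_gram_difference_uminus net_gram_difference_nonneg_cmult) auto
  then show ?thesis
    by simp
qed

lemma net_gram_difference_symmetrized_product:
  assumes "net_approximable \<sigma> S \<phi>" "net_approximable \<sigma> S \<psi>"
  shows "net_gram_difference \<sigma> S (\<lambda>x x'. (\<phi> x * \<psi> x' + \<phi> x' * \<psi> x) / 2)"
proof -
  define P where "P = (\<lambda>x. (\<phi> x + \<psi> x) / 2)"
  define Q where "Q = (\<lambda>x. (\<phi> x - \<psi> x) / 2)"
  have "net_approximable \<sigma> S P" "net_approximable \<sigma> S Q"
    unfolding P_def Q_def
    using net_approximable_cmult[OF net_approximable_add[OF assms], of "1/2"]
      net_approximable_cmult[OF net_approximable_diff[OF assms], of "1/2"]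
    by simp_all
  moreover have "(\<phi> x * \<psi> x' + \<phi> x' * \<psi> x) / 2
      = (\<Sum>i<1::nat. P x * P x') - (\<Sum>i<1::nat. Q x * Q x')" for x x'
    by (simp add: P_def Q_def field_simps)
  ultimately show ?thesis
    by (intro net_gram_differenceI[where n = 1 and m = 1 and P = "\<lambda>_. P" and Q = "\<lambda>_. Q"]) auto
qed

lemma net_gram_difference_exp_sums:
  fixes f :: "'a::real_inner \<times> 'a \<Rightarrow> real"
  assumes exp: "\<And>w. net_approximable \<sigma> S (\<lambda>x. exp (w \<bullet> x))" and "f \<in> exp_sums"
  shows "net_gram_difference \<sigma> S (\<lambda>x x'. (f (x, x') + f (x', x)) / 2)"
  using assms(2)
proof (induction rule: exp_sums.induct)
  case (exp_sums_exp w)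
  obtain w1 w2 where "w = (w1, w2)"
    by (cases w)
  then show ?case
    using net_gram_difference_symmetrized_product[OF exp exp, of w1 w2] by (simp add: exp_add)
next
  case (exp_sums_add f g)
  have "(\<lambda>x x'. (f (x, x') + g (x, x') + (f (x', x) + g (x', x))) / 2)
      = (\<lambda>x x'. (f (x, x') + f (x', x)) / 2 + (g (x, x') + g (x', x)) / 2)"
    by (simp add: fun_eq_iff field_simps)
  then show ?case
    using net_gram_difference_add[OF exp_sums_add.IH] by simp
next
  case (exp_sums_cmult f k)
  have "(\<lambda>x x'. (k * f (x, x') + k * f (x', x)) / 2) = (\<lambda>x x'. k * ((f (x, x') + f (x', x)) / 2))"
    by (simp add: fun_eq_iff field_simps)
  then show ?case
    using net_gram_difference_cmult[OF exp_sums_cmult.IH, of k] by simp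
qed

section \<open>Networks with several outputs\<close>

lemma shallow_net_block_diagonal:
  assumes "W > 0" "n * W \<le> T"
  shows "shallow_net \<sigma> T (\<lambda>i t. if i < n \<and> t div W = i then a i (t mod W) else 0)
           (\<lambda>t. b (t div W) (t mod W)) (\<lambda>t. c (t div W) (t mod W)) x i
         = (if i < n then ridge_net \<sigma> W (a i) (b i) (c i) x else 0)"
proof (cases "i < n")
  case True
  let ?f = "\<lambda>t. (if i < n \<and> t div W = i then a i (t mod W) else 0)
    * \<sigma> (b (t div W) (t mod W) \<bullet> x + c (t div W) (t mod W))"
  have "i * W + W \<le> n * W"
    using True by (metis Suc_leI add.commute mult_Suc mult_le_mono1)
  then have block: "{i * W..<i * W + W} \<subseteq> {..<T}"
    using assms(2) by auto
  have outside: "?f t = 0" if "t \<notin> {i * W..<i * W + W}" for t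
  proof -
    have "t div W \<noteq> i"
    proof
      assume "t div W = i"
      then have "i * W \<le> t \<and> t < i * W + W"
        using assms(1)
        by (metis add.commute div_times_less_eq_dividend dividend_less_div_times mult.commute)
      then show False
        using that by auto
    qed
    then show ?thesis
      by simp
  qed
  have "shallow_net \<sigma> T (\<lambda>i t. if i < n \<and> t div W = i then a i (t mod W) else 0)
           (\<lambda>t. b (t div W) (t mod W)) (\<lambda>t. c (t div W) (t mod W)) x i = (\<Sum>t<T. ?f t)"
    by (simp add: shallow_net_def)
  also have "\<dots> = (\<Sum>t\<in>{i * W..<i * W + W}. ?f t)"
    using block outside by (intro sum.mono_neutral_right) auto
  also have "\<dots> = (\<Sum>s\<in>{0..<W}. ?f (s + i * W))"
    using sum.shift_bounds_nat_ivl[of ?f 0 "i * W" W] by (simp add: add.commute)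
  also have "\<dots> = ridge_net \<sigma> W (a i) (b i) (c i) x"
    unfolding ridge_net_def atLeast0LessThan using assms(1) True by (intro sum.cong) auto
  finally show ?thesis
    using True by simp
next
  case False
  then show ?thesis
    by (simp add: shallow_net_def)
qed

lemma abs_mult_diff_le:
  fixes u u' v v' B e :: real
  assumes "\<bar>u\<bar> \<le> B" "\<bar>u'\<bar> \<le> B" "\<bar>u - v\<bar> \<le> e" "\<bar>u' - v'\<bar> \<le> e" "e \<le> 1"
  shows "\<bar>u * u' - v * v'\<bar> \<le> (2 * B + 1) * e"
proof -
  have "\<bar>v'\<bar> \<le> B + 1"
    using assms(2,4,5) by linarith
  have "\<bar>u * u' - v * v'\<bar> = \<bar>u * (u' - v') + v' * (u - v)\<bar>"
    by (simp add: algebra_simps)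
  also have "\<dots> \<le> \<bar>u\<bar> * \<bar>u' - v'\<bar> + \<bar>v'\<bar> * \<bar>u - v\<bar>"
    unfolding abs_mult[symmetric] by (rule abs_triangle_ineq)
  also have "\<dots> \<le> B * e + (B + 1) * e"
    using assms \<open>\<bar>v'\<bar> \<le> B + 1\<close> by (intro add_mono mult_mono) auto
  finally show ?thesis
    by (simp add: algebra_simps)
qed

lemma sum_products_diff_le:
  fixes u u' v v' :: "nat \<Rightarrow> real"
  assumes "\<And>i. i < n \<Longrightarrow> \<bar>u i\<bar> \<le> B" "\<And>i. i < n \<Longrightarrow> \<bar>u' i\<bar> \<le> B"
    and "\<And>i. i < n \<Longrightarrow> \<bar>u i - v i\<bar> \<le> e" "\<And>i. i < n \<Longrightarrow> \<bar>u' i - v' i\<bar> \<le> e" "e \<le> 1"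
  shows "\<bar>(\<Sum>i<n. u i * u' i) - (\<Sum>i<n. v i * v' i)\<bar> \<le> real n * ((2 * B + 1) * e)"
proof -
  have "\<bar>(\<Sum>i<n. u i * u' i) - (\<Sum>i<n. v i * v' i)\<bar> \<le> (\<Sum>i<n. \<bar>u i * u' i - v i * v' i\<bar>)"
    by (simp add: sum_subtractf[symmetric] sum_abs)
  also have "\<dots> \<le> (\<Sum>i<n. (2 * B + 1) * e)"
    using assms by (intro sum_mono abs_mult_diff_le) auto
  finally show ?thesis
    by simp
qed

lemma gram_sum_shallow_net_approx:
  fixes P :: "nat \<Rightarrow> real ^ 'p \<Rightarrow> real" and n :: nat
  assumes "compact S" "continuous_on UNIV \<sigma>" "\<forall>i<n. net_approximable \<sigma> S (P i)" "\<eta> > 0"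
  shows "\<exists>W A B c. \<forall>K T. n \<le> K \<longrightarrow> n * W \<le> T \<longrightarrow> (\<forall>x\<in>S. \<forall>x'\<in>S.
     \<bar>(\<Sum>i<n. P i x * P i x') - inner_K K (shallow_net \<sigma> T A B c x) (shallow_net \<sigma> T A B c x')\<bar> \<le> \<eta>)"
proof -
  obtain Bd where "Bd \<ge> 0" and Bd: "\<And>i x. i < n \<Longrightarrow> x \<in> S \<Longrightarrow> \<bar>P i x\<bar> \<le> Bd"
    using net_approximable_family_bounded[OF assms(1-3)] by blast
  define e where "e = min 1 (\<eta> / ((real n + 1) * (2 * Bd + 1)))"
  have "e > 0"
    using assms(4) \<open>Bd \<ge> 0\<close> by (simp add: e_def)
  have "(2 * Bd + 1) * e \<le> (2 * Bd + 1) * (\<eta> / ((real n + 1) * (2 * Bd + 1)))"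
    using \<open>Bd \<ge> 0\<close> by (intro mult_left_mono) (auto simp: e_def)
  also have "\<dots> = \<eta> / (real n + 1)"
    using \<open>Bd \<ge> 0\<close> by simp
  finally have "real n * ((2 * Bd + 1) * e) \<le> real n * (\<eta> / (real n + 1))"
    by (intro mult_left_mono) auto
  also have "\<dots> \<le> \<eta>"
    using assms(4) by (simp add: field_simps)
  finally have error_bound: "real n * ((2 * Bd + 1) * e) \<le> \<eta>" .
  obtain W a b c where "W > 0" and net:
    "\<And>i x. i < n \<Longrightarrow> x \<in> S \<Longrightarrow> \<bar>P i x - ridge_net \<sigma> W (a i) (b i) (c i) x\<bar> < e"
    using net_approximable_common_width[OF assms(3) \<open>e > 0\<close>] by blast
  let ?N = "\<lambda>i. ridge_net \<sigma> W (a i) (b i) (c i)"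
  let ?A = "\<lambda>i t. if i < n \<and> t div W = i then a i (t mod W) else 0"
  let ?B = "\<lambda>t. b (t div W) (t mod W)" and ?C = "\<lambda>t. c (t div W) (t mod W)"
  have "\<bar>(\<Sum>i<n. P i x * P i x')
      - inner_K K (shallow_net \<sigma> T ?A ?B ?C x) (shallow_net \<sigma> T ?A ?B ?C x')\<bar> \<le> \<eta>"
    if "n \<le> K" "n * W \<le> T" "x \<in> S" "x' \<in> S" for K T x x'
  proof -
    have "inner_K K (shallow_net \<sigma> T ?A ?B ?C x) (shallow_net \<sigma> T ?A ?B ?C x')
        = (\<Sum>i<n. ?N i x * ?N i x')"
      unfolding inner_K_def shallow_net_block_diagonal[OF \<open>W > 0\<close> that(2)]
      using that(1) by (intro sum.mono_neutral_cong_right) auto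
    moreover have "\<bar>(\<Sum>i<n. P i x * P i x') - (\<Sum>i<n. ?N i x * ?N i x')\<bar> \<le> real n * ((2 * Bd + 1) * e)"
      using Bd net that(3,4) by (intro sum_products_diff_le) (auto simp: e_def less_imp_le)
    ultimately show ?thesis
      using error_bound by simp
  qed
  then show ?thesis
    by blast
qed

section \<open>Approximation of kernels\<close>

lemma is_kernel_pullback:
  assumes "is_kernel Y g" "continuous_on S f" "f ` S \<subseteq> Y"
  shows "is_kernel S (\<lambda>x x'. g (f x) (f x'))"
proof -
  have "continuous_on (Y \<times> Y) (\<lambda>(y, y'). g y y')"
    using assms(1) by (simp add: is_kernel_def)
  moreover have "continuous_on (S \<times> S) (\<lambda>z. (f (fst z), f (snd z)))"
    by (intro continuous_on_Pair continuous_on_compose2[OF assms(2)] continuous_intros) auto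
  ultimately have "continuous_on (S \<times> S) (\<lambda>z. (\<lambda>(y, y'). g y y') (f (fst z), f (snd z)))"
    by (rule continuous_on_compose2) (use assms(3) in force)
  then show ?thesis
    using assms(1,3) unfolding is_kernel_def by (auto simp: case_prod_unfold)
qed

lemma kernel_approx_net_gram_difference:
  fixes k :: "'a::real_inner \<Rightarrow> 'a \<Rightarrow> real"
  assumes "compact S" "is_kernel S k"
    and "squashing H" "\<And>b c. net_approximable \<sigma> S (\<lambda>x. H (b \<bullet> x + c))" "\<epsilon> > 0"
  shows "\<exists>l. net_gram_difference \<sigma> S l \<and> (\<forall>x\<in>S. \<forall>x'\<in>S. \<bar>k x x' - l x x'\<bar> < \<epsilon>)"
proof -
  have k_cont: "continuous_on (S \<times> S) (\<lambda>(x, x'). k x x')"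
    and k_sym: "\<And>x x'. x \<in> S \<Longrightarrow> x' \<in> S \<Longrightarrow> k x' x = k x x'"
    using assms(2) unfolding is_kernel_def by auto
  have exp: "net_approximable \<sigma> S (\<lambda>x. exp (w \<bullet> x))" for w
    by (rule net_approximable_ridge_function[OF compact_imp_bounded[OF assms(1)] assms(3,4)
          continuous_on_exp[OF continuous_on_id]])
  obtain f where "f \<in> exp_sums" and f: "\<forall>z\<in>S \<times> S. \<bar>(\<lambda>(x, x'). k x x') z - f z\<bar> < \<epsilon>"
    using exp_sums_dense[OF compact_Times[OF assms(1,1)] k_cont assms(5)] by auto
  have "\<bar>k x x' - (f (x, x') + f (x', x)) / 2\<bar> < \<epsilon>" if "x \<in> S" "x' \<in> S" for x x'
  proof -
    have "\<bar>k x x' - f (x, x')\<bar> < \<epsilon>" "\<bar>k x' x - f (x', x)\<bar> < \<epsilon>"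
      using f that by auto
    then show ?thesis
      using k_sym[OF that] unfolding abs_less_iff by argo
  qed
  then show ?thesis
    using net_gram_difference_exp_sums[OF exp \<open>f \<in> exp_sums\<close>]
    by (intro exI[of _ "\<lambda>x x'. (f (x, x') + f (x', x)) / 2"]) simp
qed

lemma kernel_uniform_approx_shallow_nets:
  fixes k :: "real ^ 'p \<Rightarrow> real ^ 'p \<Rightarrow> real"
  assumes "compact S" "is_kernel S k"
    and "continuous_on UNIV \<sigma>" "squashing H" "\<And>b c. net_approximable \<sigma> S (\<lambda>x. H (b \<bullet> x + c))"
  shows "\<forall>\<epsilon>>0. \<exists>N::nat. \<exists>Tp0 Tm0 :: nat \<Rightarrow> nat. \<forall>Kp Km. N \<le> Kp \<longrightarrow> N \<le> Km \<longrightarrow>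
           (\<forall>Tp Tm. Tp0 Kp \<le> Tp \<longrightarrow> Tm0 Km \<le> Tm \<longrightarrow>
             (\<exists>A::nat \<Rightarrow> nat \<Rightarrow> real. \<exists>B::nat \<Rightarrow> real ^ 'p. \<exists>c::nat \<Rightarrow> real.
              \<exists>E::nat \<Rightarrow> nat \<Rightarrow> real. \<exists>F::nat \<Rightarrow> real ^ 'p. \<exists>d::nat \<Rightarrow> real.
               \<forall>x\<in>S. \<forall>x'\<in>S.
                 \<bar>k x x' - (inner_K Kp (shallow_net \<sigma> Tp A B c x) (shallow_net \<sigma> Tp A B c x')
                      - inner_K Km (shallow_net \<sigma> Tm E F d x) (shallow_net \<sigma> Tm E F d x'))\<bar> < \<epsilon>))"
    (is "\<forall>\<epsilon>>0. ?approx \<epsilon>")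
proof (intro allI impI)
  fix \<epsilon> :: real assume "\<epsilon> > 0"
  then obtain l where l_gram: "net_gram_difference \<sigma> S l"
    and l: "\<forall>x\<in>S. \<forall>x'\<in>S. \<bar>k x x' - l x x'\<bar> < \<epsilon> / 2"
    using kernel_approx_net_gram_difference[OF assms(1,2,4,5), of "\<epsilon> / 2"] by auto
  from l_gram obtain n :: nat and P and m :: nat and Q where P: "\<forall>i<n. net_approximable \<sigma> S (P i)"
    and Q: "\<forall>i<m. net_approximable \<sigma> S (Q i)"
    and l_eq: "\<And>x x'. l x x' = (\<Sum>i<n. P i x * P i x') - (\<Sum>i<m. Q i x * Q i x')"
    by (rule net_gram_differenceE) blast
  obtain WP AP BP CP where P_net: "\<forall>K T. n \<le> K \<longrightarrow> n * WP \<le> T \<longrightarrow> (\<forall>x\<in>S. \<forall>x'\<in>S.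
      \<bar>(\<Sum>i<n. P i x * P i x')
        - inner_K K (shallow_net \<sigma> T AP BP CP x) (shallow_net \<sigma> T AP BP CP x')\<bar> \<le> \<epsilon> / 4)"
    using gram_sum_shallow_net_approx[OF assms(1,3) P, of "\<epsilon> / 4"] \<open>\<epsilon> > 0\<close> by auto
  obtain WQ AQ BQ CQ where Q_net: "\<forall>K T. m \<le> K \<longrightarrow> m * WQ \<le> T \<longrightarrow> (\<forall>x\<in>S. \<forall>x'\<in>S.
      \<bar>(\<Sum>i<m. Q i x * Q i x')
        - inner_K K (shallow_net \<sigma> T AQ BQ CQ x) (shallow_net \<sigma> T AQ BQ CQ x')\<bar> \<le> \<epsilon> / 4)"
    using gram_sum_shallow_net_approx[OF assms(1,3) Q, of "\<epsilon> / 4"] \<open>\<epsilon> > 0\<close> by auto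
  have "\<bar>k x x' - (inner_K Kp (shallow_net \<sigma> Tp AP BP CP x) (shallow_net \<sigma> Tp AP BP CP x')
          - inner_K Km (shallow_net \<sigma> Tm AQ BQ CQ x) (shallow_net \<sigma> Tm AQ BQ CQ x'))\<bar> < \<epsilon>"
    if "max n m \<le> Kp" "max n m \<le> Km" "n * WP \<le> Tp" "m * WQ \<le> Tm" "x \<in> S" "x' \<in> S"
    for Kp Km Tp Tm x x'
  proof -
    have "\<bar>k x x' - l x x'\<bar> < \<epsilon> / 2"
      using l that(5,6) by blast
    moreover have "\<bar>(\<Sum>i<n. P i x * P i x')
        - inner_K Kp (shallow_net \<sigma> Tp AP BP CP x) (shallow_net \<sigma> Tp AP BP CP x')\<bar> \<le> \<epsilon> / 4"
      using P_net that by simp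
    moreover have "\<bar>(\<Sum>i<m. Q i x * Q i x')
        - inner_K Km (shallow_net \<sigma> Tm AQ BQ CQ x) (shallow_net \<sigma> Tm AQ BQ CQ x')\<bar> \<le> \<epsilon> / 4"
      using Q_net that by simp
    ultimately show ?thesis
      unfolding l_eq abs_less_iff abs_le_iff by argo
  qed
  then show "?approx \<epsilon>"
    by (intro exI[of _ "max n m"] exI[of _ "\<lambda>_. n * WP"] exI[of _ "\<lambda>_. m * WQ"] allI impI
        exI[of _ AP] exI[of _ BP] exI[of _ CP] exI[of _ AQ] exI[of _ BQ] exI[of _ CQ] ballI) simp
qed

lemma compact_cube: "compact (cube M)"
proof -
  have cube_eq: "cube M = cbox (- (\<chi> i. M)) (\<chi> i. M)"
    unfolding cube_def by (auto simp: mem_box_cart abs_le_iff) (metis minus_le_iff)+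
  show ?thesis
    unfolding cube_eq by (rule compact_cbox)
qed

theorem theoremA1:
  fixes M :: real
    and Y :: "(real ^ 'k) set"
    and fstar :: "real ^ 'p \<Rightarrow> real ^ 'k"
    and gstar :: "real ^ 'k \<Rightarrow> real ^ 'k \<Rightarrow> real"
    and \<sigma> :: "real \<Rightarrow> real"
  assumes "M > 0"
    and "closed Y"
    and "continuous_on (cube M) fstar"
    and "fstar ` cube M \<subseteq> Y"
    and "is_kernel Y gstar"
    and "\<exists>g. pd_kernel Y g \<and> pd_on Y (\<lambda>y y'. g y y' - gstar y y')"
    and "\<sigma> = relu \<or>
         ((\<exists>a b. \<sigma> a \<noteq> \<sigma> b) \<and> continuous_on UNIV \<sigma> \<and> bounded (range \<sigma>) \<and> mono \<sigma>)"
  shows "\<forall>\<epsilon>>0. \<exists>N::nat. \<exists>Tp0 Tm0 :: nat \<Rightarrow> nat.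
           \<forall>Kp Km. N \<le> Kp \<longrightarrow> N \<le> Km \<longrightarrow>
           (\<forall>Tp Tm. Tp0 Kp \<le> Tp \<longrightarrow> Tm0 Km \<le> Tm \<longrightarrow>
             (\<exists>A::nat \<Rightarrow> nat \<Rightarrow> real. \<exists>B::nat \<Rightarrow> real ^ 'p. \<exists>c::nat \<Rightarrow> real.
              \<exists>E::nat \<Rightarrow> nat \<Rightarrow> real. \<exists>F::nat \<Rightarrow> real ^ 'p. \<exists>d::nat \<Rightarrow> real.
               \<forall>x\<in>cube M. \<forall>x'\<in>cube M.
                 \<bar>gstar (fstar x) (fstar x')
                   - (inner_K Kp (shallow_net \<sigma> Tp A B c x) (shallow_net \<sigma> Tp A B c x')
                      - inner_K Km (shallow_net \<sigma> Tm E F d x) (shallow_net \<sigma> Tm E F d x'))\<bar> < \<epsilon>))"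
proof -
  obtain H where "squashing H"
    and H_net: "\<And>b c. net_approximable \<sigma> (cube M :: (real ^ 'p) set) (\<lambda>x. H (b \<bullet> x + c))"
    using activation_squashing[OF assms(7)] by blast
  have "continuous_on UNIV \<sigma>"
    using assms(7) unfolding relu_def by (auto intro: continuous_intros)
  then show ?thesis
    using kernel_uniform_approx_shallow_nets[OF compact_cube is_kernel_pullback[OF assms(5,3,4)] _
        \<open>squashing H\<close> H_net]
    by simp
qed

end
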